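(* Let $\Omega\subset\mathbb{R}^n$ be a bounded domain that is star-shaped with respect to a point $x^*\in\Omega$, and let $g\in C(\Omega)$. Let $u$ be a viscosity subsolution of \[ \min\{u(x)-g(x),\ (x-x^* )\cdot\nabla u(x)\}=0 \quad\text{in }\Omega \] such that $u(x^* )\le g(x^* )$, and let $v$ be a viscosity supersolution of the same equation. Then $u\le v$ in $\Omega$.
   Context: Let $F(x,r,p)=\min\{r-g(x),(x-x^* )\cdot p\}$. An upper semicontinuous $u:\Omega\to\mathbb{R}$ is a viscosity subsolution of $F[u]=0$ in $\Omega$ if for every $\phi\in C^1(\Omega)$, whenever $u-\phi$ has a local maximum at $x\in\Omega$, $F(x,u(x),\nabla\phi(x))\le 0$. A lower semicontinuous $v:\Omega\to\mathbb{R}$ is a viscosity supersolution if for every $\phi\in C^1(\Omega)$, whenever $v-\phi$ has a local minimum at $x\in\Omega$, $F(x,v(x),\nabla\phi(x))\ge 0$. *)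

theory Defs
  imports "HOL-Analysis.Analysis"
begin

definition usc_on :: "'a::metric_space set \<Rightarrow> ('a \<Rightarrow> real) \<Rightarrow> bool" where
  "usc_on S u \<longleftrightarrow> (\<forall>x\<in>S. \<forall>e>0. \<exists>d>0. \<forall>y\<in>S. dist y x < d \<longrightarrow> u y < u x + e)"

definition lsc_on :: "'a::metric_space set \<Rightarrow> ('a \<Rightarrow> real) \<Rightarrow> bool" where
  "lsc_on S u \<longleftrightarrow> (\<forall>x\<in>S. \<forall>e>0. \<exists>d>0. \<forall>y\<in>S. dist y x < d \<longrightarrow> u x - e < u y)"

definition C1_on :: "'a::euclidean_space set \<Rightarrow> ('a \<Rightarrow> real) \<Rightarrow> ('a \<Rightarrow> 'a) \<Rightarrow> bool" where
  "C1_on S phi Dphi \<longleftrightarrow>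
     (\<forall>x\<in>S. (phi has_derivative (\<lambda>h. Dphi x \<bullet> h)) (at x)) \<and> continuous_on S Dphi"

definition F_ham :: "('a::euclidean_space \<Rightarrow> real) \<Rightarrow> 'a \<Rightarrow> 'a \<Rightarrow> real \<Rightarrow> 'a \<Rightarrow> real" where
  "F_ham g xs x r p = min (r - g x) ((x - xs) \<bullet> p)"

definition visc_subsol :: "'a::euclidean_space set \<Rightarrow> ('a \<Rightarrow> real) \<Rightarrow> 'a \<Rightarrow> ('a \<Rightarrow> real) \<Rightarrow> bool" where
  "visc_subsol \<Omega> g xs u \<longleftrightarrow> usc_on \<Omega> u \<and>
     (\<forall>phi Dphi x. C1_on \<Omega> phi Dphi \<and> x \<in> \<Omega> \<and>
        (\<exists>d>0. \<forall>y\<in>\<Omega>. dist y x < d \<longrightarrow> u y - phi y \<le> u x - phi x)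
        \<longrightarrow> F_ham g xs x (u x) (Dphi x) \<le> 0)"

definition visc_supersol :: "'a::euclidean_space set \<Rightarrow> ('a \<Rightarrow> real) \<Rightarrow> 'a \<Rightarrow> ('a \<Rightarrow> real) \<Rightarrow> bool" where
  "visc_supersol \<Omega> g xs v \<longleftrightarrow> lsc_on \<Omega> v \<and>
     (\<forall>phi Dphi x. C1_on \<Omega> phi Dphi \<and> x \<in> \<Omega> \<and>
        (\<exists>d>0. \<forall>y\<in>\<Omega>. dist y x < d \<longrightarrow> v x - phi x \<le> v y - phi y)
        \<longrightarrow> F_ham g xs x (v x) (Dphi x) \<ge> 0)"

end

theory Submission
  imports Defs
begin

text \<open>
  Suppose u x0 > v x0. The segment from xs to x0 lies in \<Omega>, and the squared distance \<psi>
  to it is C^1, nondecreasing along rays from xs, and has a compact sublevel set inside \<Omega>.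
  Maximise u x - v y - k1 |x - y|^2 - k2 |x - xs|^2 - k3 (\<psi> x + \<psi> y) over that sublevel set:
  for large k1, k3 the maximiser (xm, ym) is interior with xm, ym close. If u xm \<le> g xm,
  the supersolution inequality v ym \<ge> g ym and uniform continuity of g make u xm - v ym small.
  Otherwise both test functions have radial derivatives of the wrong sign; as \<psi> is radially
  nondecreasing this forces xm = ym = xs, where u \<le> g \<le> v. Either way u xm - v ym cannot
  stay above half of u x0 - v x0.
\<close>

lemma usc_on_subset: "usc_on S f \<Longrightarrow> T \<subseteq> S \<Longrightarrow> usc_on T f"
  unfolding usc_on_def by blast

lemma lsc_on_subset: "lsc_on S f \<Longrightarrow> T \<subseteq> S \<Longrightarrow> lsc_on T f"
  unfolding lsc_on_def by blast

lemma lsc_on_imp_usc_on_uminus: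
  assumes "lsc_on S f"
  shows "usc_on S (\<lambda>x. - f x)"
  unfolding usc_on_def
proof (intro ballI allI impI)
  fix x and e :: real
  assume "x \<in> S" "0 < e"
  then obtain d where "0 < d" "\<forall>y\<in>S. dist y x < d \<longrightarrow> f x - e < f y"
    using assms unfolding lsc_on_def by blast
  then show "\<exists>d>0. \<forall>y\<in>S. dist y x < d \<longrightarrow> - f y < - f x + e"
    by (intro exI[of _ d]) auto
qed

lemma continuous_on_imp_usc_on:
  assumes "continuous_on S f"
  shows "usc_on S f"
  unfolding usc_on_def
proof (intro ballI allI impI)
  fix x and e :: real
  assume "x \<in> S" "0 < e"
  then obtain d where "0 < d" "\<forall>y\<in>S. dist y x < d \<longrightarrow> dist (f y) (f x) < e"
    using assms unfolding continuous_on_iff by blast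
  then show "\<exists>d>0. \<forall>y\<in>S. dist y x < d \<longrightarrow> f y < f x + e"
    by (intro exI[of _ d]) (auto simp: dist_real_def abs_less_iff)
qed

lemma usc_on_add:
  assumes "usc_on S f" "usc_on S h"
  shows "usc_on S (\<lambda>x. f x + h x)"
  unfolding usc_on_def
proof (intro ballI allI impI)
  fix x and e :: real
  assume "x \<in> S" "0 < e"
  then have "0 < e / 2" by simp
  then obtain d1 d2 where "0 < d1" and d1: "\<forall>y\<in>S. dist y x < d1 \<longrightarrow> f y < f x + e / 2"
    and "0 < d2" and d2: "\<forall>y\<in>S. dist y x < d2 \<longrightarrow> h y < h x + e / 2"
    using assms \<open>x \<in> S\<close> unfolding usc_on_def by blast
  show "\<exists>d>0. \<forall>y\<in>S. dist y x < d \<longrightarrow> f y + h y < f x + h x + e"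
  proof (intro exI[of _ "min d1 d2"] conjI ballI impI)
    fix y
    assume "y \<in> S" "dist y x < min d1 d2"
    with d1 d2 have "f y < f x + e / 2" "h y < h x + e / 2" by simp_all
    then show "f y + h y < f x + h x + e" by linarith
  qed (use \<open>0 < d1\<close> \<open>0 < d2\<close> in simp)
qed

lemma usc_on_compose:
  assumes "usc_on S f" "continuous_on T h" "h ` T \<subseteq> S"
  shows "usc_on T (\<lambda>x. f (h x))"
  unfolding usc_on_def
proof (intro ballI allI impI)
  fix x and e :: real
  assume "x \<in> T" "0 < e"
  then obtain d where "d > 0" and d: "\<forall>z\<in>S. dist z (h x) < d \<longrightarrow> f z < f (h x) + e"
    using assms(1,3) unfolding usc_on_def by blast
  obtain d' where "d' > 0" and d': "\<forall>y\<in>T. dist y x < d' \<longrightarrow> dist (h y) (h x) < d"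
    using assms(2) \<open>x \<in> T\<close> \<open>d > 0\<close> unfolding continuous_on_iff by blast
  show "\<exists>d>0. \<forall>y\<in>T. dist y x < d \<longrightarrow> f (h y) < f (h x) + e"
    using \<open>d' > 0\<close> d d' assms(3) by blast
qed

lemma usc_on_compact_attains_max:
  assumes "compact S" "S \<noteq> {}" "usc_on S f"
  shows "\<exists>x\<in>S. \<forall>y\<in>S. f y \<le> f x"
proof (rule ccontr)
  assume no_max: "\<not> ?thesis"
  \<comment> \<open>Every point is beaten near itself by another point, so the best centre of a
    finite subcover would be beaten too.\<close>
  have "\<exists>d>0. \<exists>y\<in>S. \<forall>z\<in>S. dist z x < d \<longrightarrow> f z < f y" if "x \<in> S" for x
  proof -
    obtain y where "y \<in> S" "f x < f y" using no_max \<open>x \<in> S\<close> by (meson not_le)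
    moreover obtain d where "d > 0" "\<forall>z\<in>S. dist z x < d \<longrightarrow> f z < f x + (f y - f x)"
      using assms(3) \<open>x \<in> S\<close> \<open>f x < f y\<close> unfolding usc_on_def
      by (meson diff_gt_0_iff_gt)
    ultimately show ?thesis by auto
  qed
  then obtain d y where dy: "\<And>x. x \<in> S \<Longrightarrow>
      d x > 0 \<and> y x \<in> S \<and> (\<forall>z\<in>S. dist z x < d x \<longrightarrow> f z < f (y x))"
    by metis
  obtain X where X: "X \<subseteq> S" "finite X" "S \<subseteq> (\<Union>c\<in>X. ball c (d c))"
    using assms(1) by (rule compactE_image[of S S "\<lambda>c. ball c (d c)"]) (use dy in force)+
  then have "X \<noteq> {}" using assms(2) by auto
  have "Max ((\<lambda>c. f (y c)) ` X) \<in> (\<lambda>c. f (y c)) ` X"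
    using X \<open>X \<noteq> {}\<close> by (intro Max_in) auto
  then obtain c0 where "c0 \<in> X" "f (y c0) = Max ((\<lambda>c. f (y c)) ` X)" by auto
  then have c0: "c0 \<in> X" "\<And>c. c \<in> X \<Longrightarrow> f (y c) \<le> f (y c0)"
    using \<open>finite X\<close> by auto
  then have "y c0 \<in> S" using X dy by blast
  then obtain c where "c \<in> X" "y c0 \<in> ball c (d c)" using X by blast
  then have "dist (y c0) c < d c" by (simp add: dist_commute)
  then have "f (y c0) < f (y c)" using dy[of c] \<open>c \<in> X\<close> X(1) \<open>y c0 \<in> S\<close> by blast
  with c0(2)[OF \<open>c \<in> X\<close>] show False by linarith
qed

lemma C1_on_add:
  assumes "C1_on S f Df" "C1_on S h Dh"
  shows "C1_on S (\<lambda>x. f x + h x) (\<lambda>x. Df x + Dh x)"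
proof -
  have "((\<lambda>x. f x + h x) has_derivative (\<lambda>k. (Df x + Dh x) \<bullet> k)) (at x)" if "x \<in> S" for x
    using has_derivative_add[of f "\<lambda>k. Df x \<bullet> k" "at x" h "\<lambda>k. Dh x \<bullet> k"] assms that
    unfolding C1_on_def by (simp add: inner_add_left)
  moreover have "continuous_on S (\<lambda>x. Df x + Dh x)"
    using assms unfolding C1_on_def by (intro continuous_on_add) auto
  ultimately show ?thesis unfolding C1_on_def by blast
qed

lemma C1_on_cmult:
  assumes "C1_on S f Df"
  shows "C1_on S (\<lambda>x. c * f x) (\<lambda>x. c *\<^sub>R Df x)"
proof -
  have "((\<lambda>x. c * f x) has_derivative (\<lambda>h. (c *\<^sub>R Df x) \<bullet> h)) (at x)" if "x \<in> S" for x
    using has_derivative_mult_right[of f "\<lambda>h. Df x \<bullet> h" "at x" c] assms that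
    unfolding C1_on_def by simp
  moreover have "continuous_on S (\<lambda>x. c *\<^sub>R Df x)"
    using assms unfolding C1_on_def by (intro continuous_on_scaleR continuous_on_const) auto
  ultimately show ?thesis unfolding C1_on_def by blast
qed

lemma C1_on_norm_diff_power2: "C1_on S (\<lambda>x. norm (x - a)^2) (\<lambda>x. 2 *\<^sub>R (x - a))"
proof -
  have "((\<lambda>x. (x - a) \<bullet> (x - a)) has_derivative (\<lambda>h. (2 *\<^sub>R (x - a)) \<bullet> h)) (at x)" for x
    by (auto intro!: derivative_eq_intros simp: inner_commute algebra_simps)
  moreover have "continuous_on S (\<lambda>x. 2 *\<^sub>R (x - a))"
    by (intro continuous_intros)
  ultimately show ?thesis unfolding C1_on_def power2_norm_eq_inner by blast
qed

lemma C1_on_imp_continuous_on: "C1_on S f Df \<Longrightarrow> continuous_on S f"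
  unfolding C1_on_def
  by (metis continuous_at_imp_continuous_on has_derivative_continuous)

definition pos_sq :: "real \<Rightarrow> real" where "pos_sq s = (max 0 s)^2"

lemma pos_sq_has_real_derivative: "(pos_sq has_real_derivative 2 * max 0 s) (at s)"
proof (cases "s = 0")
  case True
  have "((\<lambda>y. max 0 y) \<longlongrightarrow> 0) (at (0::real))"
    by (intro tendsto_eq_intros) auto
  moreover have "\<forall>\<^sub>F y in at 0. max 0 y = (pos_sq y - pos_sq 0) / (y - 0)"
    unfolding eventually_at_filter by (auto simp: pos_sq_def max_def power2_eq_square)
  ultimately have "((\<lambda>y. (pos_sq y - pos_sq 0) / (y - 0)) \<longlongrightarrow> 0) (at 0)"
    by (rule Lim_transform_eventually)
  with True show ?thesis by (simp add: has_field_derivative_iff)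
next
  case False
  then consider "s < 0" | "0 < s" by linarith
  then show ?thesis
  proof cases
    case 1
    have "((\<lambda>_. 0) has_real_derivative 2 * max 0 s) (at s)" using 1 by simp
    then show ?thesis
      by (rule has_field_derivative_transform_within_open[where S="{..<0}"])
        (use 1 in \<open>auto simp: pos_sq_def\<close>)
  next
    case 2
    have "((\<lambda>y. y^2) has_real_derivative 2 * max 0 s) (at s)"
      using 2 by (auto intro!: derivative_eq_intros)
    then show ?thesis
      by (rule has_field_derivative_transform_within_open[where S="{0<..}"])
        (use 2 in \<open>auto simp: pos_sq_def\<close>)
  qed
qed

lemma pos_sq_has_derivative [derivative_intros]:
  assumes "(f has_derivative f') (at x within S)"
  shows "((\<lambda>x. pos_sq (f x)) has_derivative (\<lambda>h. 2 * max 0 (f x) * f' h)) (at x within S)"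
  using has_derivative_compose[OF assms pos_sq_has_real_derivative[unfolded has_field_derivative_def]] .

(* For norm e = 1 and 0 \<le> l, the squared distance to the segment from a to a + l e,
   written in a form that is visibly C^1. *)
definition seg_sqdist :: "'a::real_inner \<Rightarrow> 'a \<Rightarrow> real \<Rightarrow> 'a \<Rightarrow> real" where
  "seg_sqdist a e l x = norm (x - a)^2 - ((x - a) \<bullet> e)^2
     + pos_sq ((x - a) \<bullet> e - l) + pos_sq (- ((x - a) \<bullet> e))"

definition seg_sqdist_grad :: "'a::real_inner \<Rightarrow> 'a \<Rightarrow> real \<Rightarrow> 'a \<Rightarrow> 'a" where
  "seg_sqdist_grad a e l x = 2 *\<^sub>R (x - a)
     + (2 * max 0 ((x - a) \<bullet> e - l) - 2 * max 0 (- ((x - a) \<bullet> e)) - 2 * ((x - a) \<bullet> e)) *\<^sub>R e"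

lemma seg_sqdist_has_derivative:
  "(seg_sqdist a e l has_derivative (\<lambda>h. seg_sqdist_grad a e l x \<bullet> h)) (at x)"
  unfolding seg_sqdist_def[abs_def] seg_sqdist_grad_def power2_norm_eq_inner
  by (auto intro!: derivative_eq_intros simp: fun_eq_iff inner_add_left inner_diff_left inner_commute algebra_simps)

lemma C1_on_seg_sqdist: "C1_on S (seg_sqdist a e l) (seg_sqdist_grad a e l)"
proof -
  have "continuous_on S (seg_sqdist_grad a e l)"
    unfolding seg_sqdist_grad_def[abs_def] by (intro continuous_intros)
  then show ?thesis unfolding C1_on_def using seg_sqdist_has_derivative by blast
qed

lemma seg_sqdist_grad_radial:
  assumes "norm e = 1" "0 \<le> l"
  shows "0 \<le> (x - a) \<bullet> seg_sqdist_grad a e l x"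
proof -
  define s where "s = (x - a) \<bullet> e"
  have "s^2 \<le> norm (x - a)^2"
    using Cauchy_Schwarz_ineq[of "x - a" e] assms(1) by (simp add: s_def power2_norm_eq_inner norm_eq_1)
  moreover have "0 \<le> max 0 (s - l) * s" "0 \<le> max 0 (- s) * (- s)"
    using assms(2) by (auto simp: max_def)
  moreover have "(x - a) \<bullet> seg_sqdist_grad a e l x
      = 2 * (norm (x - a)^2 - s^2) + 2 * (max 0 (s - l) * s) + 2 * (max 0 (- s) * (- s))"
    unfolding seg_sqdist_grad_def s_def power2_norm_eq_inner
    by (simp add: inner_add_right inner_commute algebra_simps power2_eq_square)
  ultimately show ?thesis by (smt (verit))
qed

lemma seg_sqdist_eq_dist_power2:
  assumes "norm e = 1" "0 \<le> l"
  obtains z where "z \<in> closed_segment a (a + l *\<^sub>R e)" "seg_sqdist a e l x = dist x z ^ 2"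
proof -
  define s where "s = (x - a) \<bullet> e"
  define t where "t = max 0 (min l s)"
  have "0 \<le> t" "t \<le> l" using assms(2) by (auto simp: t_def)
  have "dist x (a + t *\<^sub>R e) ^ 2 = norm (x - a)^2 - 2 * t * s + t^2"
    using assms(1) unfolding norm_eq_1 s_def dist_norm power2_norm_eq_inner
    by (simp add: inner_diff_left inner_diff_right inner_commute power2_eq_square algebra_simps)
  also have "\<dots> = seg_sqdist a e l x"
    unfolding seg_sqdist_def pos_sq_def s_def[symmetric] t_def using assms(2)
    by (cases "s \<le> 0"; cases "s \<le> l") (auto simp: power2_eq_square algebra_simps max_def min_def)
  finally have "seg_sqdist a e l x = dist x (a + t *\<^sub>R e) ^ 2" ..
  moreover have "a + t *\<^sub>R e \<in> closed_segment a (a + l *\<^sub>R e)"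
  proof (cases "l = 0")
    case True
    then show ?thesis using \<open>0 \<le> t\<close> \<open>t \<le> l\<close> by simp
  next
    case False
    then have "a + t *\<^sub>R e = (1 - t / l) *\<^sub>R a + (t / l) *\<^sub>R (a + l *\<^sub>R e)"
      by (simp add: algebra_simps)
    moreover have "0 \<le> t / l" "t / l \<le> 1"
      using \<open>0 \<le> t\<close> \<open>t \<le> l\<close> False by (auto simp: divide_le_eq_1)
    ultimately show ?thesis unfolding in_segment by blast
  qed
  ultimately show thesis using that by blast
qed

lemma seg_sqdist_nonneg: "norm e = 1 \<Longrightarrow> 0 \<le> l \<Longrightarrow> 0 \<le> seg_sqdist a e l x"
  by (metis seg_sqdist_eq_dist_power2 zero_le_power2)

lemma seg_sqdist_endpoint:
  assumes "norm e = 1" "0 \<le> l"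
  shows "seg_sqdist a e l (a + l *\<^sub>R e) = 0"
proof -
  have "e \<bullet> e = 1" using assms(1) by (simp add: norm_eq_1)
  with assms show ?thesis by (simp add: seg_sqdist_def pos_sq_def)
qed

lemma seg_sqdist_sublevel_subset:
  assumes "norm e = 1" "0 \<le> l" "0 \<le> r"
  shows "{x. seg_sqdist a e l x \<le> r^2} \<subseteq> (\<Union>z\<in>closed_segment a (a + l *\<^sub>R e). cball z r)"
proof
  fix x assume "x \<in> {x. seg_sqdist a e l x \<le> r^2}"
  moreover obtain z where "z \<in> closed_segment a (a + l *\<^sub>R e)" "seg_sqdist a e l x = dist x z ^ 2"
    using seg_sqdist_eq_dist_power2[OF assms(1,2)] .
  ultimately have "dist z x \<le> r"
    using assms(3) by (metis dist_commute mem_Collect_eq power2_le_imp_le)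
  with \<open>z \<in> closed_segment a (a + l *\<^sub>R e)\<close>
  show "x \<in> (\<Union>z\<in>closed_segment a (a + l *\<^sub>R e). cball z r)" by auto
qed

lemma exists_unit_direction:
  fixes a b :: "'a::euclidean_space"
  obtains e l where "norm e = 1" "0 \<le> l" "b = a + l *\<^sub>R e"
proof (cases "a = b")
  case True
  obtain e :: 'a where "norm e = 1" using vector_choose_size zero_le_one by blast
  with True that[of e 0] show thesis by simp
next
  case False
  then have "norm ((b - a) /\<^sub>R norm (b - a)) = 1" "b = a + norm (b - a) *\<^sub>R ((b - a) /\<^sub>R norm (b - a))"
    by simp_all
  then show thesis by (rule that[OF _ norm_ge_zero])
qed

lemma visc_subsol_at_local_max:
  assumes "visc_subsol \<Omega> g xs u" "C1_on \<Omega> \<phi> D\<phi>" "open U" "U \<subseteq> \<Omega>" "x \<in> U"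
    and "\<And>y. y \<in> U \<Longrightarrow> u y - \<phi> y \<le> u x - \<phi> x"
  shows "u x \<le> g x \<or> (x - xs) \<bullet> D\<phi> x \<le> 0"
proof -
  obtain d where "d > 0" "ball x d \<subseteq> U" using assms(3,5) open_contains_ball by blast
  then have "F_ham g xs x (u x) (D\<phi> x) \<le> 0"
    using assms unfolding visc_subsol_def by (metis (no_types, lifting) dist_commute mem_ball subsetD)
  then show ?thesis unfolding F_ham_def by linarith
qed

lemma visc_supersol_at_local_min:
  assumes "visc_supersol \<Omega> g xs v" "C1_on \<Omega> \<phi> D\<phi>" "open U" "U \<subseteq> \<Omega>" "x \<in> U"
    and "\<And>y. y \<in> U \<Longrightarrow> v x - \<phi> x \<le> v y - \<phi> y"
  shows "g x \<le> v x" "0 \<le> (x - xs) \<bullet> D\<phi> x"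
proof -
  obtain d where "d > 0" "ball x d \<subseteq> U" using assms(3,5) open_contains_ball by blast
  then have "0 \<le> F_ham g xs x (v x) (D\<phi> x)"
    using assms unfolding visc_supersol_def by (metis (no_types, lifting) dist_commute mem_ball subsetD)
  then show "g x \<le> v x" "0 \<le> (x - xs) \<bullet> D\<phi> x" unfolding F_ham_def by linarith+
qed

lemma radial_penalty_forces_center:
  fixes a x y :: "'a::real_inner"
  assumes "0 < k1" "0 < k2"
    and "k1 * ((x - a) \<bullet> (x - y)) + k2 * norm (x - a)^2 \<le> 0"
    and "k1 * ((y - a) \<bullet> (y - x)) \<le> 0"
  shows "x = a" "y = a"
proof -
  have "(x - a) \<bullet> (x - y) + (y - a) \<bullet> (y - x) = norm (x - y)^2"
    by (simp add: power2_norm_eq_inner algebra_simps inner_commute)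
  then have "k1 * norm (x - y)^2 = k1 * ((x - a) \<bullet> (x - y)) + k1 * ((y - a) \<bullet> (y - x))"
    by (simp add: distrib_left[symmetric])
  then have "k1 * norm (x - y)^2 + k2 * norm (x - a)^2 \<le> 0"
    using assms(3,4) by linarith
  then have "k1 * norm (x - y)^2 = 0" "k2 * norm (x - a)^2 = 0"
    using assms(1,2) by (smt (verit) mult_nonneg_nonneg zero_le_power2)+
  then show "x = a" "y = a" using assms(1,2) by auto
qed

locale radial_comparison =
  fixes \<Omega> :: "'a::euclidean_space set" and xs :: 'a
    and g u v \<psi> :: "'a \<Rightarrow> real" and D\<psi> :: "'a \<Rightarrow> 'a"
  assumes open_domain: "open \<Omega>"
    and continuous_g: "continuous_on \<Omega> g"
    and subsol: "visc_subsol \<Omega> g xs u" and u_le_g_center: "u xs \<le> g xs"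
    and supersol: "visc_supersol \<Omega> g xs v"
    and C1_\<psi>: "C1_on \<Omega> \<psi> D\<psi>"
    and \<psi>_nonneg: "\<And>x. x \<in> \<Omega> \<Longrightarrow> 0 \<le> \<psi> x"
    and \<psi>_radial: "\<And>x. x \<in> \<Omega> \<Longrightarrow> 0 \<le> (x - xs) \<bullet> D\<psi> x"
begin

definition doubling :: "real \<Rightarrow> real \<Rightarrow> real \<Rightarrow> 'a \<Rightarrow> 'a \<Rightarrow> real" where
  "doubling k1 k2 k3 x y =
     u x - v y - k1 * norm (x - y)^2 - k2 * norm (x - xs)^2 - k3 * (\<psi> x + \<psi> y)"

lemma doubling_attains_max:
  assumes "compact K" "K \<subseteq> \<Omega>" "K \<noteq> {}"
  obtains xm ym where "xm \<in> K" "ym \<in> K"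
    "\<And>x y. x \<in> K \<Longrightarrow> y \<in> K \<Longrightarrow> doubling k1 k2 k3 x y \<le> doubling k1 k2 k3 xm ym"
proof -
  have fst: "continuous_on (K \<times> K) fst" "fst ` (K \<times> K) \<subseteq> K"
    and snd: "continuous_on (K \<times> K) snd" "snd ` (K \<times> K) \<subseteq> K"
    by (auto intro: continuous_on_fst continuous_on_snd continuous_on_id)
  have "usc_on K u" "usc_on K (\<lambda>y. - v y)"
    using subsol supersol assms(2) unfolding visc_subsol_def visc_supersol_def
    by (auto intro: usc_on_subset lsc_on_imp_usc_on_uminus lsc_on_subset)
  then have "usc_on (K \<times> K) (\<lambda>p. u (fst p))" "usc_on (K \<times> K) (\<lambda>p. - v (snd p))"
    using usc_on_compose fst snd by blast+
  moreover have "continuous_on K \<psi>"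
    using C1_on_imp_continuous_on[OF C1_\<psi>] assms(2) by (rule continuous_on_subset)
  then have "continuous_on (K \<times> K) (\<lambda>p. \<psi> (fst p))" "continuous_on (K \<times> K) (\<lambda>p. \<psi> (snd p))"
    using continuous_on_compose2 fst snd by blast+
  then have "usc_on (K \<times> K) (\<lambda>p. - (k1 * norm (fst p - snd p)^2 + k2 * norm (fst p - xs)^2
      + k3 * (\<psi> (fst p) + \<psi> (snd p))))"
    by (intro continuous_on_imp_usc_on continuous_intros)
  ultimately have "usc_on (K \<times> K) (\<lambda>p. u (fst p) + - v (snd p) + - (k1 * norm (fst p - snd p)^2
      + k2 * norm (fst p - xs)^2 + k3 * (\<psi> (fst p) + \<psi> (snd p))))"
    by (intro usc_on_add)
  moreover have "(\<lambda>p. u (fst p) + - v (snd p) + - (k1 * norm (fst p - snd p)^2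
      + k2 * norm (fst p - xs)^2 + k3 * (\<psi> (fst p) + \<psi> (snd p))))
    = (\<lambda>p. doubling k1 k2 k3 (fst p) (snd p))"
    by (simp add: fun_eq_iff doubling_def)
  ultimately have "usc_on (K \<times> K) (\<lambda>p. doubling k1 k2 k3 (fst p) (snd p))" by simp
  moreover have "K \<times> K \<noteq> {}" using assms(3) by simp
  ultimately obtain p where "p \<in> K \<times> K"
    and max: "\<forall>q\<in>K \<times> K. doubling k1 k2 k3 (fst q) (snd q) \<le> doubling k1 k2 k3 (fst p) (snd p)"
    using usc_on_compact_attains_max[OF compact_Times[OF assms(1) assms(1)]] by blast
  show thesis
  proof (rule that)
    show "fst p \<in> K" "snd p \<in> K" using \<open>p \<in> K \<times> K\<close> by auto
    fix x y
    assume "x \<in> K" "y \<in> K"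
    then show "doubling k1 k2 k3 x y \<le> doubling k1 k2 k3 (fst p) (snd p)"
      using max[rule_format, of "(x, y)"] by simp
  qed
qed

lemma gap_at_doubling_max:
  assumes "0 < k1" "0 < k2" "0 \<le> k3" "open U" "U \<subseteq> \<Omega>" "xm \<in> U" "ym \<in> U"
    and max: "\<And>x y. x \<in> U \<Longrightarrow> y \<in> U \<Longrightarrow> doubling k1 k2 k3 x y \<le> doubling k1 k2 k3 xm ym"
  shows "u xm - v ym \<le> g xm - g ym \<or> u xm \<le> v ym"
proof -
  define \<phi> where "\<phi> x = k1 * norm (x - ym)^2 + k2 * norm (x - xs)^2 + k3 * \<psi> x" for x
  define D\<phi> where "D\<phi> x = k1 *\<^sub>R (2 *\<^sub>R (x - ym)) + k2 *\<^sub>R (2 *\<^sub>R (x - xs)) + k3 *\<^sub>R D\<psi> x" for x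
  have "C1_on \<Omega> \<phi> D\<phi>"
    unfolding \<phi>_def D\<phi>_def by (intro C1_on_add C1_on_cmult C1_on_norm_diff_power2 C1_\<psi>)
  moreover have "u x - \<phi> x \<le> u xm - \<phi> xm" if "x \<in> U" for x
    using max[OF that \<open>ym \<in> U\<close>] by (simp add: doubling_def \<phi>_def distrib_left)
  ultimately have sub: "u xm \<le> g xm \<or> (xm - xs) \<bullet> D\<phi> xm \<le> 0"
    using visc_subsol_at_local_max[OF subsol] assms(4-6) by blast
  define \<theta> where "\<theta> y = (- k1) * norm (y - xm)^2 + (- k3) * \<psi> y" for y
  define D\<theta> where "D\<theta> y = (- k1) *\<^sub>R (2 *\<^sub>R (y - xm)) + (- k3) *\<^sub>R D\<psi> y" for y
  have "C1_on \<Omega> \<theta> D\<theta>"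
    unfolding \<theta>_def D\<theta>_def by (intro C1_on_add C1_on_cmult C1_on_norm_diff_power2 C1_\<psi>)
  moreover have "v ym - \<theta> ym \<le> v y - \<theta> y" if "y \<in> U" for y
    using max[OF \<open>xm \<in> U\<close> that] by (simp add: doubling_def \<theta>_def norm_minus_commute distrib_left)
  ultimately have super: "g ym \<le> v ym" "0 \<le> (ym - xs) \<bullet> D\<theta> ym"
    using visc_supersol_at_local_min[OF supersol] assms(4,5,7) by blast+
  show ?thesis
  proof (cases "u xm \<le> g xm")
    case True
    with super(1) show ?thesis by linarith
  next
    case False
    have "xm \<in> \<Omega>" "ym \<in> \<Omega>" using assms(5-7) by auto
    have "(xm - xs) \<bullet> D\<phi> xm = 2 * (k1 * ((xm - xs) \<bullet> (xm - ym)) + k2 * norm (xm - xs)^2)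
        + k3 * ((xm - xs) \<bullet> D\<psi> xm)"
      by (simp add: D\<phi>_def inner_add_right power2_norm_eq_inner algebra_simps)
    moreover have "0 \<le> k3 * ((xm - xs) \<bullet> D\<psi> xm)" using assms(3) \<psi>_radial[OF \<open>xm \<in> \<Omega>\<close>] by simp
    moreover have "(xm - xs) \<bullet> D\<phi> xm \<le> 0" using sub False by simp
    ultimately have "k1 * ((xm - xs) \<bullet> (xm - ym)) + k2 * norm (xm - xs)^2 \<le> 0"
      by (smt (verit))
    have "(ym - xs) \<bullet> D\<theta> ym = - 2 * (k1 * ((ym - xs) \<bullet> (ym - xm))) - k3 * ((ym - xs) \<bullet> D\<psi> ym)"
      by (simp add: D\<theta>_def inner_add_right algebra_simps)
    moreover have "0 \<le> k3 * ((ym - xs) \<bullet> D\<psi> ym)" using assms(3) \<psi>_radial[OF \<open>ym \<in> \<Omega>\<close>] by simp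
    ultimately have "k1 * ((ym - xs) \<bullet> (ym - xm)) \<le> 0"
      using super(2) by linarith
    with \<open>k1 * ((xm - xs) \<bullet> (xm - ym)) + k2 * norm (xm - xs)^2 \<le> 0\<close>
    have "xm = xs" "ym = xs" by (rule radial_penalty_forces_center[OF assms(1,2)])+
    with super(1) u_le_g_center show ?thesis by simp
  qed
qed

lemma doubling_max_penalties_bounded:
  assumes "0 \<le> k1" "0 \<le> k2" "0 \<le> k3" "xm \<in> \<Omega>" "ym \<in> \<Omega>"
    and "c \<le> doubling k1 k2 k3 xm ym" "u xm - v ym \<le> R"
  shows "c \<le> u xm - v ym" "k1 * norm (xm - ym)^2 \<le> R - c"
    "k3 * \<psi> xm \<le> R - c" "k3 * \<psi> ym \<le> R - c"
proof -
  have "0 \<le> k1 * norm (xm - ym)^2" "0 \<le> k2 * norm (xm - xs)^2"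
    "0 \<le> k3 * \<psi> xm" "0 \<le> k3 * \<psi> ym"
    using assms(1-5) \<psi>_nonneg by simp_all
  with assms(6,7) show "c \<le> u xm - v ym" "k1 * norm (xm - ym)^2 \<le> R - c"
    "k3 * \<psi> xm \<le> R - c" "k3 * \<psi> ym \<le> R - c"
    unfolding doubling_def distrib_left by linarith+
qed

lemma doubling_max_localized:
  assumes "compact K" "K \<subseteq> \<Omega>" "x0 \<in> K" "\<psi> x0 = 0" "0 < d" "0 < \<rho>"
    and gap: "0 < u x0 - v x0" and R: "\<And>x y. x \<in> K \<Longrightarrow> y \<in> K \<Longrightarrow> u x - v y \<le> R"
  obtains k1 k2 k3 xm ym where "0 < k1" "0 < k2" "0 < k3" "xm \<in> K" "ym \<in> K"
    "\<And>x y. x \<in> K \<Longrightarrow> y \<in> K \<Longrightarrow> doubling k1 k2 k3 x y \<le> doubling k1 k2 k3 xm ym"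
    "(u x0 - v x0) / 2 \<le> u xm - v ym" "dist xm ym < d" "\<psi> xm < \<rho>" "\<psi> ym < \<rho>"
proof -
  define \<delta> where "\<delta> = u x0 - v x0"
  have "0 < \<delta>" "\<delta> \<le> R" using gap R[OF assms(3,3)] by (simp_all add: \<delta>_def)
  \<comment> \<open>k2 keeps doubling k1 k2 k3 x0 x0 above \<delta>/2; k1 and k3 make the penalties exceed
    the oscillation bound R unless dist xm ym < d and \<psi> < \<rho> at xm and ym.\<close>
  define k1 where "k1 = (R + 1) / d^2"
  define k2 where "k2 = \<delta> / (2 * (norm (x0 - xs)^2 + 1))"
  define k3 where "k3 = (R + 1) / \<rho>"
  have "0 < R + 1" "0 < norm (x0 - xs)^2 + 1"
    using \<open>0 < \<delta>\<close> \<open>\<delta> \<le> R\<close> by (simp_all add: add_nonneg_pos)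
  then have k: "0 < k1" "0 < k2" "0 < k3" and "k1 * d^2 = R + 1" "k3 * \<rho> = R + 1"
    using \<open>0 < d\<close> \<open>0 < \<delta>\<close> \<open>0 < \<rho>\<close> unfolding k1_def k2_def k3_def by simp_all
  obtain xm ym where "xm \<in> K" "ym \<in> K"
    and max: "\<And>x y. x \<in> K \<Longrightarrow> y \<in> K \<Longrightarrow> doubling k1 k2 k3 x y \<le> doubling k1 k2 k3 xm ym"
    using doubling_attains_max[OF assms(1,2)] assms(3) by blast
  have "k2 * norm (x0 - xs)^2 \<le> \<delta> / 2"
    unfolding k2_def using \<open>0 < \<delta>\<close> \<open>0 < norm (x0 - xs)^2 + 1\<close> by (simp add: field_simps)
  then have "\<delta> / 2 \<le> doubling k1 k2 k3 x0 x0"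
    using assms(4) by (simp add: doubling_def \<delta>_def)
  also have "\<dots> \<le> doubling k1 k2 k3 xm ym" using max assms(3) by blast
  moreover have "xm \<in> \<Omega>" "ym \<in> \<Omega>" using \<open>xm \<in> K\<close> \<open>ym \<in> K\<close> assms(2) by auto
  ultimately have bounds: "\<delta> / 2 \<le> u xm - v ym" "k1 * norm (xm - ym)^2 \<le> R - \<delta> / 2"
    "k3 * \<psi> xm \<le> R - \<delta> / 2" "k3 * \<psi> ym \<le> R - \<delta> / 2"
    using doubling_max_penalties_bounded[of k1 k2 k3 xm ym "\<delta> / 2" R] k R[OF \<open>xm \<in> K\<close> \<open>ym \<in> K\<close>]
    by simp_all
  have "k1 * norm (xm - ym)^2 < k1 * d^2"
    using bounds(2) \<open>k1 * d^2 = R + 1\<close> \<open>0 < \<delta>\<close> by linarith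
  then have "norm (xm - ym)^2 < d^2" using k(1) by (simp add: mult_less_cancel_left_pos)
  then have "dist xm ym < d"
    using \<open>0 < d\<close> by (simp add: dist_norm power_less_imp_less_base)
  have "k3 * \<psi> xm < k3 * \<rho>" "k3 * \<psi> ym < k3 * \<rho>"
    using bounds(3,4) \<open>k3 * \<rho> = R + 1\<close> \<open>0 < \<delta>\<close> by linarith+
  then have "\<psi> xm < \<rho>" "\<psi> ym < \<rho>" using k(3) by (simp_all add: mult_less_cancel_left_pos)
  with that[OF k \<open>xm \<in> K\<close> \<open>ym \<in> K\<close> max] bounds(1) \<open>dist xm ym < d\<close>
  show thesis by (simp add: \<delta>_def)
qed

lemma le_at_zero_of_compact_sublevel:
  assumes "compact {x\<in>\<Omega>. \<psi> x \<le> \<rho>}" "0 < \<rho>" "x0 \<in> \<Omega>" "\<psi> x0 = 0"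
  shows "u x0 \<le> v x0"
proof (rule ccontr)
  assume "\<not> u x0 \<le> v x0"
  then have gap: "0 < u x0 - v x0" by simp
  define K where "K = {x\<in>\<Omega>. \<psi> x \<le> \<rho>}"
  define U where "U = {x\<in>\<Omega>. \<psi> x < \<rho>}"
  have K: "compact K" "K \<subseteq> \<Omega>" "x0 \<in> K" and "U \<subseteq> K"
    using assms unfolding K_def U_def by auto
  have "open U"
    using continuous_open_preimage[OF C1_on_imp_continuous_on[OF C1_\<psi>] open_domain, of "{..<\<rho>}"]
    by (simp add: U_def vimage_def Int_def)
  obtain a b where "a \<in> K" "b \<in> K"
    and ab: "\<And>x y. x \<in> K \<Longrightarrow> y \<in> K \<Longrightarrow> doubling 0 0 0 x y \<le> doubling 0 0 0 a b"
    using doubling_attains_max[OF K(1,2)] K(3) by blast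
  then have R: "u x - v y \<le> u a - v b" if "x \<in> K" "y \<in> K" for x y
    using ab[OF that] by (simp add: doubling_def)
  obtain d where "0 < d"
    and d: "\<forall>y\<in>K. \<forall>x\<in>K. dist x y < d \<longrightarrow> dist (g x) (g y) < (u x0 - v x0) / 2"
    using compact_uniformly_continuous[OF continuous_on_subset[OF continuous_g K(2)] K(1)] gap
    unfolding uniformly_continuous_on_def by (meson half_gt_zero)
  obtain k1 k2 k3 xm ym where k: "0 < k1" "0 < k2" "0 < k3" and "xm \<in> K" "ym \<in> K"
    and max: "\<And>x y. x \<in> K \<Longrightarrow> y \<in> K \<Longrightarrow> doubling k1 k2 k3 x y \<le> doubling k1 k2 k3 xm ym"
    and "(u x0 - v x0) / 2 \<le> u xm - v ym" "dist xm ym < d" "\<psi> xm < \<rho>" "\<psi> ym < \<rho>"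
    using doubling_max_localized[OF K(1-3) assms(4) \<open>0 < d\<close> assms(2) gap R] by blast
  then have "xm \<in> U" "ym \<in> U" unfolding K_def U_def by auto
  then have "u xm - v ym \<le> g xm - g ym \<or> u xm \<le> v ym"
    using gap_at_doubling_max[OF k(1,2) less_imp_le[OF k(3)] \<open>open U\<close>] max \<open>U \<subseteq> K\<close> K(2) by blast
  moreover have "dist (g xm) (g ym) < (u x0 - v x0) / 2"
    using d \<open>xm \<in> K\<close> \<open>ym \<in> K\<close> \<open>dist xm ym < d\<close> by blast
  then have "g xm - g ym < (u x0 - v x0) / 2" by (metis abs_less_iff dist_real_def)
  ultimately show False using \<open>(u x0 - v x0) / 2 \<le> u xm - v ym\<close> gap by auto
qed

end

theorem proposition3p14:
  fixes \<Omega> :: "'a::euclidean_space set" and xs :: 'a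
    and g u v :: "'a \<Rightarrow> real"
  assumes "open \<Omega>" and "connected \<Omega>" and "bounded \<Omega>"
    and "xs \<in> \<Omega>" and "\<forall>x\<in>\<Omega>. closed_segment xs x \<subseteq> \<Omega>"
    and "continuous_on \<Omega> g"
    and "visc_subsol \<Omega> g xs u" and "u xs \<le> g xs"
    and "visc_supersol \<Omega> g xs v"
  shows "\<forall>x\<in>\<Omega>. u x \<le> v x"
proof
  fix x0
  assume "x0 \<in> \<Omega>"
  obtain e l where e: "norm e = 1" "0 \<le> l" and x0: "x0 = xs + l *\<^sub>R e"
    using exists_unit_direction .
  obtain r where "0 < r" and r: "(\<Union>z\<in>closed_segment xs x0. cball z r) \<subseteq> \<Omega>"
    using compact_subset_open_imp_cball_epsilon_subset[OF compact_segment assms(1)]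
      assms(5) \<open>x0 \<in> \<Omega>\<close> by blast
  let ?\<psi> = "seg_sqdist xs e l"
  have sublevel: "{x. ?\<psi> x \<le> r^2} \<subseteq> \<Omega>"
    using seg_sqdist_sublevel_subset[OF e less_imp_le[OF \<open>0 < r\<close>]] r unfolding x0 by blast
  have "closed {x. ?\<psi> x \<le> r^2}"
    using C1_on_imp_continuous_on[OF C1_on_seg_sqdist] by (rule closed_Collect_le) simp
  moreover have "bounded {x. ?\<psi> x \<le> r^2}" using assms(3) sublevel by (rule bounded_subset)
  moreover have "{x\<in>\<Omega>. ?\<psi> x \<le> r^2} = {x. ?\<psi> x \<le> r^2}" using sublevel by blast
  ultimately have "compact {x\<in>\<Omega>. ?\<psi> x \<le> r^2}" by (simp add: compact_eq_bounded_closed)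
  interpret radial_comparison \<Omega> xs g u v ?\<psi> "seg_sqdist_grad xs e l"
    using assms e
    by unfold_locales (auto intro: C1_on_seg_sqdist seg_sqdist_nonneg seg_sqdist_grad_radial)
  have "?\<psi> x0 = 0" using seg_sqdist_endpoint[OF e] x0 by simp
  moreover have "0 < r^2" using \<open>0 < r\<close> by simp
  ultimately show "u x0 \<le> v x0"
    using le_at_zero_of_compact_sublevel \<open>compact _\<close> \<open>x0 \<in> \<Omega>\<close> by blast
qed

end
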